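(* Let $\langle A,f,g\rangle$ be a PS-algebra satisfying (ABT0) $x\leq f(x,x)$, (ABT2) $y\cdot f(x,z)\leq f(x\cdot f(x,y),z)$ and (ABT3) $f(x,g(x,-y)\cdot y)\leq y$ for all $x,y,z\in A$. Then the map $d\colon A\to A$, $d(a)=f(a,a)+-g(a,a)$, is the unary discriminator on $A$ (i.e. $d(0)=0$ and $d(a)=1$ for $a\neq0$) if and only if $\langle A,f,g\rangle$ satisfies (ABTW): for all $a\in A$, $a\neq0\Rightarrow g(a,a)\leq a$.
   Context: A PS-algebra is $\langle A,f,g\rangle$ where $A$ is a Boolean algebra with at least two elements (operations $+,\cdot,-,0,1$) and $f,g\colon A^2\to A$ satisfy: $f(x,y)=0$ whenever $x=0$ or $y=0$; $f$ is additive in each argument; $g(x,y)=1$ whenever $x=0$ or $y=0$; $g$ is co-additive in each argument ($g(x+x',y)=g(x,y)\cdot g(x',y)$, $g(x,y+y')=g(x,y)\cdot g(x,y')$). *)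

theory Defs
  imports Main
begin

text \<open>A PS-algebra on a Boolean algebra (type class boolean_algebra, with
  bot = 0, top = 1, sup = +, inf = \<cdot>, uminus = complement), required to have
  at least two elements.\<close>

definition PS_algebra :: "('a::boolean_algebra \<Rightarrow> 'a \<Rightarrow> 'a) \<Rightarrow> ('a \<Rightarrow> 'a \<Rightarrow> 'a) \<Rightarrow> bool" where
  "PS_algebra f g \<longleftrightarrow>
     (bot::'a) \<noteq> top \<and>
     (\<forall>x y. (x = bot \<or> y = bot) \<longrightarrow> f x y = bot) \<and>
     (\<forall>x x' y. f (sup x x') y = sup (f x y) (f x' y)) \<and>
     (\<forall>x y y'. f x (sup y y') = sup (f x y) (f x y')) \<and>
     (\<forall>x y. (x = bot \<or> y = bot) \<longrightarrow> g x y = top) \<and>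
     (\<forall>x x' y. g (sup x x') y = inf (g x y) (g x' y)) \<and>
     (\<forall>x y y'. g x (sup y y') = inf (g x y) (g x y'))"

end

theory Submission
  imports Defs
begin

text \<open>Since \<open>f 0 0 = 0\<close> and \<open>g 0 0 = 1\<close>, always \<open>d 0 = 0\<close>, and \<open>d a = 1\<close> is equivalent
  to \<open>g a a \<le> f a a\<close>. (ABTW) together with (ABT0) gives \<open>g a a \<le> a \<le> f a a\<close>. Conversely,
  if \<open>g a a \<le> f a a\<close>, put \<open>b = g a a \<cdot> -a\<close>: (ABT3) with \<open>y = -a\<close> gives \<open>f a b \<le> -a\<close>, so
  \<open>a \<cdot> f a b = 0\<close>, and (ABT2) then yields \<open>b = b \<cdot> f a a \<le> f (a \<cdot> f a b) a = f 0 a = 0\<close>,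
  i.e. \<open>g a a \<le> a\<close>.\<close>

lemma PS_algebra_bot:
  assumes "PS_algebra f g"
  shows "f bot y = bot" "g bot y = top"
  using assms unfolding PS_algebra_def by auto

lemma PS_algebra_discr_bot:
  assumes "PS_algebra f g"
  shows "sup (f bot bot) (- g bot bot) = bot"
  by (simp add: PS_algebra_bot[OF assms])

lemma PS_algebra_g_diag_le_if_le_f_diag:
  fixes f g :: "'a::boolean_algebra \<Rightarrow> 'a \<Rightarrow> 'a"
  assumes PS: "PS_algebra f g"
    and ABT2: "\<forall>x y z. inf y (f x z) \<le> f (inf x (f x y)) z"
    and ABT3: "\<forall>x y. f x (inf (g x (- y)) y) \<le> y"
    and gf: "g a a \<le> f a a"
  shows "g a a \<le> a"
proof -
  define b where "b = inf (g a a) (- a)"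
  have "f a b \<le> - a"
    using ABT3 unfolding b_def by (metis double_compl)
  then have a_fab: "inf a (f a b) = bot"
    by (metis inf_commute inf_shunt)
  have "b = inf b (f a a)"
    using gf unfolding b_def by (simp add: inf.absorb1 le_infI1)
  also have "\<dots> \<le> f (inf a (f a b)) a"
    using ABT2 by blast
  also have "\<dots> = bot"
    by (simp add: a_fab PS_algebra_bot[OF PS])
  finally show ?thesis
    unfolding b_def by (simp add: bot_unique inf_shunt)
qed

theorem theorem36:
  fixes f g :: "'a::boolean_algebra \<Rightarrow> 'a \<Rightarrow> 'a"
  assumes PS: "PS_algebra f g"
    and ABT0: "\<forall>x. x \<le> f x x"
    and ABT2: "\<forall>x y z. inf y (f x z) \<le> f (inf x (f x y)) z"
    and ABT3: "\<forall>x y. f x (inf (g x (- y)) y) \<le> y"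
  shows "((\<lambda>a. sup (f a a) (- g a a)) bot = bot \<and>
          (\<forall>a. a \<noteq> bot \<longrightarrow> (\<lambda>a. sup (f a a) (- g a a)) a = top))
         \<longleftrightarrow> (\<forall>a. a \<noteq> bot \<longrightarrow> g a a \<le> a)"
proof -
  have "g a a \<le> f a a \<longleftrightarrow> g a a \<le> a" for a
    using PS_algebra_g_diag_le_if_le_f_diag[OF PS ABT2 ABT3] ABT0 order_trans by blast
  then show ?thesis
    by (simp add: PS_algebra_discr_bot[OF PS] sup_shunt)
qed

end
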